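(* Let $\tau\in(0,1]$ and suppose that $\alpha=(2/k)^{1/((2-\tau)d)}$ (in addition to $\alpha=2^{-r}$ for a positive integer $r$). Let $p$ be a positive integer. Then, under the Fast-Filter model described in the context, $$\mathbb{E}\Big[\sum_{i=1}^k|S_i|\Big]=2^{1/(2-\tau)}\,N\,k^{1-1/(2-\tau)}=O\big(Nk^{1-1/(2-\tau)}\big),$$ and, for every $i\in[k]$, $$\frac{k}{p}\,\big(\mathbb{E}[|S_i|]\big)^2=O\big(N^2k^{1-2/(2-\tau)}/p\big).$$
   Context: Let $G=(U,V,E)$ be a bipartite graph with $|U|=M$ and $|V|=N$. For $v\in V$ let $\Gamma(v)\subseteq U$ be its set of neighbours, and assume $|\Gamma(v)|=d\ge 1$ for every $v\in V$. Let $k=2^{m}$ and $\alpha=2^{-r}$, where $m,r$ are positive integers. Identify $[k]=\{1,\dots,k\}$ bijectively with the vector space $\mathrm{GF}(2)^m$ (for instance via the binary representation of $i-1$). Fast-Filter model: for each $u\in U$, independently draw a uniformly random matrix $A'_u\in\mathrm{GF}(2)^{r\times m}$ and a uniformly random vector $b'_u\in\mathrm{GF}(2)^{r}$; all of these are mutually independent. For $v\in V$, let $A^v$ be the $(dr)\times m$ matrix obtained by stacking the matrices $A'_u$, $u\in\Gamma(v)$, in a fixed order, and let $b^v\in\mathrm{GF}(2)^{dr}$ be obtained by stacking the $b'_u$, $u\in\Gamma(v)$, in the same order. For $i\in[k]$ (viewed as a vector in $\mathrm{GF}(2)^m$), the survival set is $S_i=\{v\in V: A^v i+b^v=0\}$,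 with arithmetic over $\mathrm{GF}(2)$. *)

theory Defs
  imports "HOL-Probability.Probability" "HOL-Library.Z2"
begin

text \<open>GF(2) is the field type bit. An r x m matrix over GF(2) is a function
  nat => nat => bit vanishing outside [0,r) x [0,m); a vector in GF(2)^r is a
  function nat => bit vanishing outside [0,r).\<close>

definition gf2_mats :: "nat \<Rightarrow> nat \<Rightarrow> (nat \<Rightarrow> nat \<Rightarrow> bit) set" where
  "gf2_mats r m = {A. \<forall>a b. (r \<le> a \<or> m \<le> b) \<longrightarrow> A a b = 0}"

definition gf2_vecs :: "nat \<Rightarrow> (nat \<Rightarrow> bit) set" where
  "gf2_vecs r = {x. \<forall>a. r \<le> a \<longrightarrow> x a = 0}"

text \<open>Identification of i in [k] = {1..2^m} with the binary representation of i-1.\<close>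
definition idx_vec :: "nat \<Rightarrow> nat \<Rightarrow> bit" where
  "idx_vec i b = (if odd ((i - 1) div 2 ^ b) then 1 else 0)"

text \<open>The Fast-Filter sample space: for each u in U an independent uniform pair
  (A'_u, b'_u); jointly this is the uniform distribution on the product.\<close>
definition fast_filter_pmf :: "'u set \<Rightarrow> nat \<Rightarrow> nat \<Rightarrow>
    ('u \<Rightarrow> (nat \<Rightarrow> nat \<Rightarrow> bit) \<times> (nat \<Rightarrow> bit)) pmf" where
  "fast_filter_pmf U r m = pmf_of_set (PiE U (\<lambda>_. gf2_mats r m \<times> gf2_vecs r))"

text \<open>Stacked matrix/vector A^v and b^v for a fixed ordering (list) of Gamma(v).\<close>
definition stackA :: "'u list \<Rightarrow> nat \<Rightarrow> ('u \<Rightarrow> (nat \<Rightarrow> nat \<Rightarrow> bit) \<times> (nat \<Rightarrow> bit))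
    \<Rightarrow> nat \<Rightarrow> nat \<Rightarrow> bit" where
  "stackA us r \<omega> a b = (if a < length us * r then fst (\<omega> (us ! (a div r))) (a mod r) b else 0)"

definition stackb :: "'u list \<Rightarrow> nat \<Rightarrow> ('u \<Rightarrow> (nat \<Rightarrow> nat \<Rightarrow> bit) \<times> (nat \<Rightarrow> bit))
    \<Rightarrow> nat \<Rightarrow> bit" where
  "stackb us r \<omega> a = (if a < length us * r then snd (\<omega> (us ! (a div r))) (a mod r) else 0)"

definition survival_set :: "'v set \<Rightarrow> ('v \<Rightarrow> 'u list) \<Rightarrow> nat \<Rightarrow> nat \<Rightarrow>
    ('u \<Rightarrow> (nat \<Rightarrow> nat \<Rightarrow> bit) \<times> (nat \<Rightarrow> bit)) \<Rightarrow> nat \<Rightarrow> 'v set" where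
  "survival_set V ord r m \<omega> i = {v \<in> V. \<forall>a < length (ord v) * r.
      (\<Sum>b<m. stackA (ord v) r \<omega> a b * idx_vec i b) + stackb (ord v) r \<omega> a = 0}"

end

theory Submission
  imports Defs
begin

text \<open>A vertex \<open>v\<close> lies in \<open>S\<^sub>i\<close> iff every neighbour \<open>u\<close> of \<open>v\<close> satisfies
  \<open>A'\<^sub>u i + b'\<^sub>u = 0\<close>. For fixed \<open>i\<close> this determines \<open>b'\<^sub>u\<close> from \<open>A'\<^sub>u\<close>, so it has
  probability \<open>2\<^sup>-\<^sup>r\<close>; the pairs \<open>(A'\<^sub>u, b'\<^sub>u)\<close> are independent, hence
  \<open>P(v \<in> S\<^sub>i) = 2\<^sup>-\<^sup>r\<^sup>d = (2/k)\<^bsup>1/(2-\<tau>)\<^esup>\<close> by the choice of \<open>\<alpha>\<close>. Linearity of expectation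
  gives \<open>E |S\<^sub>i| = N (2/k)\<^bsup>1/(2-\<tau>)\<^esup>\<close>, and both claims follow, the constant in the
  second one being \<open>2\<^bsup>2/(2-\<tau>)\<^esup> \<le> 4\<close>.\<close>

lemma bit_eq_iff_eq_1: "(x::bit) = y \<longleftrightarrow> (x = 1 \<longleftrightarrow> y = 1)"
  by (cases x; cases y) auto

lemma bit_add_eq_0_iff: "(y::bit) + z = 0 \<longleftrightarrow> z = y"
  by (cases y; cases z) auto

lemma card_gf2_vecs: "card (gf2_vecs r) = 2 ^ r"
  and finite_gf2_vecs: "finite (gf2_vecs r)"
proof -
  have bij: "bij_betw (\<lambda>x. {a. x a = 1}) (gf2_vecs r) (Pow {..<r})"
  proof (rule bij_betwI[where g="\<lambda>S a. if a \<in> S then 1 else 0"])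
    show "(\<lambda>x. {a. x a = 1}) \<in> gf2_vecs r \<rightarrow> Pow {..<r}"
      by (auto simp: gf2_vecs_def) (rule ccontr, simp)
    show "(\<lambda>S a. if a \<in> S then 1 else 0) \<in> Pow {..<r} \<rightarrow> gf2_vecs r"
      by (auto simp: gf2_vecs_def)
    show "(\<lambda>a. if a \<in> {a. x a = 1} then 1 else 0) = x" if "x \<in> gf2_vecs r" for x
      by (auto simp: fun_eq_iff)
    show "{a. (if a \<in> S then 1 else 0) = (1::bit)} = S" if "S \<in> Pow {..<r}" for S
      by auto
  qed
  show "card (gf2_vecs r) = 2 ^ r"
    using bij_betw_same_card[OF bij] by (simp add: card_Pow)
  show "finite (gf2_vecs r)"
    using bij_betw_finite[OF bij] by simp
qed

lemma gf2_vecs_nonempty: "gf2_vecs r \<noteq> {}"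
  using card_gf2_vecs[of r] by auto

lemma finite_gf2_mats: "finite (gf2_mats r m)"
proof -
  have "inj_on (\<lambda>A. {(a, b). A a b = 1}) (gf2_mats r m)"
  proof (rule inj_onI)
    fix A B :: "nat \<Rightarrow> nat \<Rightarrow> bit"
    assume "{(a, b). A a b = 1} = {(a, b). B a b = 1}"
    then have "A a b = 1 \<longleftrightarrow> B a b = 1" for a b
      by (simp add: set_eq_iff)
    then show "A = B"
      by (intro ext) (metis bit_eq_iff_eq_1)
  qed
  moreover have "(\<lambda>A. {(a, b). A a b = 1}) ` gf2_mats r m \<subseteq> Pow ({..<r} \<times> {..<m})"
    by (auto simp: gf2_mats_def) (rule ccontr, simp)+
  ultimately show ?thesis
    by (meson finite_Pow_iff finite_SigmaI finite_lessThan finite_subset inj_on_finite)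
qed

lemma gf2_mats_nonempty: "gf2_mats r m \<noteq> {}"
  by (auto simp: gf2_mats_def intro!: exI[of _ "\<lambda>_ _. 0"])

definition gf2_affine_zeros ::
    "nat \<Rightarrow> nat \<Rightarrow> (nat \<Rightarrow> bit) \<Rightarrow> ((nat \<Rightarrow> nat \<Rightarrow> bit) \<times> (nat \<Rightarrow> bit)) set" where
  "gf2_affine_zeros r m x = {(A, b). \<forall>a<r. (\<Sum>c<m. A a c * x c) + b a = 0}"

lemma prob_gf2_affine_zeros:
  "measure_pmf.prob (pmf_of_set (gf2_mats r m \<times> gf2_vecs r)) (gf2_affine_zeros r m x)
     = 1 / 2 ^ r"
proof -
  define Ax where "Ax A = (\<lambda>a. if a < r then \<Sum>c<m. A a c * x c else 0)"
    for A :: "nat \<Rightarrow> nat \<Rightarrow> bit"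
  have graph: "(gf2_mats r m \<times> gf2_vecs r) \<inter> gf2_affine_zeros r m x
      = (\<lambda>A. (A, Ax A)) ` gf2_mats r m"
  proof (intro equalityI subsetI)
    fix z assume z: "z \<in> (gf2_mats r m \<times> gf2_vecs r) \<inter> gf2_affine_zeros r m x"
    obtain A b where z_eq: "z = (A, b)" by force
    have "b = Ax A"
      using z unfolding z_eq Ax_def
      by (auto simp: fun_eq_iff gf2_affine_zeros_def gf2_vecs_def bit_add_eq_0_iff)
    then show "z \<in> (\<lambda>A. (A, Ax A)) ` gf2_mats r m"
      using z z_eq by auto
  qed (auto simp: gf2_affine_zeros_def gf2_vecs_def Ax_def bit_add_eq_0_iff)
  have "card ((gf2_mats r m \<times> gf2_vecs r) \<inter> gf2_affine_zeros r m x) = card (gf2_mats r m)"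
    unfolding graph by (rule card_image) (auto simp: inj_on_def)
  moreover have "card (gf2_mats r m \<times> gf2_vecs r) = card (gf2_mats r m) * 2 ^ r"
    by (simp add: card_cartesian_product card_gf2_vecs)
  moreover have "card (gf2_mats r m) > 0"
    using finite_gf2_mats gf2_mats_nonempty by (simp add: card_gt_0_iff)
  ultimately show ?thesis
    using finite_gf2_mats finite_gf2_vecs gf2_mats_nonempty gf2_vecs_nonempty
    by (subst measure_pmf_of_set) (auto simp: Int_commute)
qed

lemma mult_add_less_mult:
  fixes j a n r :: nat
  assumes "j < n" "a < r"
  shows "j * r + a < n * r"
proof -
  have "j * r + a < Suc j * r" using assms by simp
  also have "\<dots> \<le> n * r" using assms by (intro mult_le_mono1) simp
  finally show ?thesis .
qed

lemma all_less_mult_iff: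
  fixes n r :: nat
  assumes "r > 0"
  shows "(\<forall>a < n * r. P a) \<longleftrightarrow> (\<forall>j < n. \<forall>a < r. P (j * r + a))"
proof
  assume "\<forall>a < n * r. P a"
  then show "\<forall>j < n. \<forall>a < r. P (j * r + a)"
    using mult_add_less_mult by blast
next
  assume "\<forall>j < n. \<forall>a < r. P (j * r + a)"
  then show "\<forall>a < n * r. P a"
    using assms by (metis div_mult_mod_eq less_mult_imp_div_less mod_less_divisor)
qed

lemma stacked_system_zero_iff:
  assumes "r > 0"
  shows "(\<forall>a < length us * r. (\<Sum>c<m. stackA us r \<omega> a c * x c) + stackb us r \<omega> a = 0)
     \<longleftrightarrow> (\<forall>u\<in>set us. \<omega> u \<in> gf2_affine_zeros r m x)"
proof -
  have block: "stackA us r \<omega> (j * r + a) = fst (\<omega> (us ! j)) a"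
    "stackb us r \<omega> (j * r + a) = snd (\<omega> (us ! j)) a"
    if "j < length us" "a < r" for j a
    using that mult_add_less_mult[OF that] by (simp_all add: stackA_def stackb_def fun_eq_iff)
  show ?thesis
    unfolding all_less_mult_iff[OF assms] all_set_conv_all_nth
    by (simp add: block gf2_affine_zeros_def case_prod_unfold)
qed

lemma fast_filter_pmf_eq_Pi_pmf:
  assumes "finite U"
  shows "fast_filter_pmf U r m
    = Pi_pmf U undefined (\<lambda>_. pmf_of_set (gf2_mats r m \<times> gf2_vecs r))"
proof -
  have "PiE_dflt U undefined (\<lambda>_. gf2_mats r m \<times> gf2_vecs r)
      = PiE U (\<lambda>_. gf2_mats r m \<times> gf2_vecs r)"
    by (auto simp: PiE_dflt_def PiE_def extensional_def)
  then show ?thesis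
    unfolding fast_filter_pmf_def
    using assms finite_gf2_mats finite_gf2_vecs gf2_mats_nonempty gf2_vecs_nonempty
    by (subst Pi_pmf_of_set) auto
qed

lemma prob_mem_survival_set:
  assumes "finite U" "v \<in> V" "set (ord v) \<subseteq> U" "distinct (ord v)" "r > 0"
  shows "measure_pmf.prob (fast_filter_pmf U r m) {\<omega>. v \<in> survival_set V ord r m \<omega> i}
    = (1 / 2 ^ r) ^ length (ord v)"
proof -
  let ?Z = "\<lambda>u. if u \<in> set (ord v) then gf2_affine_zeros r m (idx_vec i) else UNIV"
  have "{\<omega>. v \<in> survival_set V ord r m \<omega> i} = Pi U ?Z"
    using assms stacked_system_zero_iff[OF assms(5), where us="ord v" and x="idx_vec i" and m=m]
    by (auto simp: survival_set_def Pi_def)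
  then have "measure_pmf.prob (fast_filter_pmf U r m) {\<omega>. v \<in> survival_set V ord r m \<omega> i}
      = (\<Prod>u\<in>U. measure_pmf.prob (pmf_of_set (gf2_mats r m \<times> gf2_vecs r)) (?Z u))"
    using assms by (simp add: fast_filter_pmf_eq_Pi_pmf measure_Pi_pmf_Pi)
  also have "\<dots> = (\<Prod>u\<in>U. if u \<in> set (ord v) then 1 / 2 ^ r else 1)"
    by (intro prod.cong) (auto simp: prob_gf2_affine_zeros)
  also have "\<dots> = (1 / 2 ^ r) ^ length (ord v)"
    using assms by (simp add: prod.If_cases Int_absorb1 distinct_card)
  finally show ?thesis .
qed

lemma
  fixes M :: "'a pmf"
  assumes "finite V"
  shows integrable_card_filter: "integrable M (\<lambda>\<omega>. real (card {v \<in> V. P v \<omega>}))"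
    and expectation_card_filter: "measure_pmf.expectation M (\<lambda>\<omega>. real (card {v \<in> V. P v \<omega>}))
      = (\<Sum>v\<in>V. measure_pmf.prob M {\<omega>. P v \<omega>})"
proof -
  have card_eq: "real (card {v \<in> V. P v \<omega>}) = (\<Sum>v\<in>V. indicator {\<omega>. P v \<omega>} \<omega>)" for \<omega>
  proof -
    have "{v \<in> V. P v \<omega>} = V \<inter> {v. P v \<omega>}" by blast
    then show ?thesis
      using assms by (simp add: indicator_def sum.If_cases)
  qed
  show "integrable M (\<lambda>\<omega>. real (card {v \<in> V. P v \<omega>}))"
    unfolding card_eq
    by (intro Bochner_Integration.integrable_sum integrable_real_indicator)
      (simp_all add: less_top[symmetric])
  show "measure_pmf.expectation M (\<lambda>\<omega>. real (card {v \<in> V. P v \<omega>}))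
      = (\<Sum>v\<in>V. measure_pmf.prob M {\<omega>. P v \<omega>})"
    unfolding card_eq
    by (subst Bochner_Integration.integral_sum)
      (simp_all add: less_top[symmetric])
qed

lemma expectation_card_survival_set:
  assumes "finite U" "finite V" "r > 0"
    and "\<And>v. v \<in> V \<Longrightarrow> set (ord v) \<subseteq> U \<and> distinct (ord v) \<and> length (ord v) = d"
  shows "measure_pmf.expectation (fast_filter_pmf U r m)
      (\<lambda>\<omega>. real (card (survival_set V ord r m \<omega> i))) = real (card V) * (1 / 2 ^ r) ^ d"
proof -
  have "measure_pmf.expectation (fast_filter_pmf U r m)
      (\<lambda>\<omega>. real (card (survival_set V ord r m \<omega> i)))
    = measure_pmf.expectation (fast_filter_pmf U r m)
      (\<lambda>\<omega>. real (card {v \<in> V. v \<in> survival_set V ord r m \<omega> i}))"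
    unfolding survival_set_def by simp
  also have "\<dots> = (\<Sum>v\<in>V.
      measure_pmf.prob (fast_filter_pmf U r m) {\<omega>. v \<in> survival_set V ord r m \<omega> i})"
    by (rule expectation_card_filter[OF assms(2)])
  also have "\<dots> = (\<Sum>v\<in>V. (1 / 2 ^ r) ^ d)"
    using assms by (intro sum.cong) (simp_all add: prob_mem_survival_set)
  finally show ?thesis by simp
qed

lemma power_of_powr_root:
  fixes y c :: real and d :: nat
  assumes "y > 0" "d \<ge> 1" "x = y powr (1 / (c * real d))"
  shows "x ^ d = y powr (1 / c)"
  using assms by (simp add: powr_realpow[symmetric] powr_powr)

lemma mult_divide_powr:
  fixes k a e :: real
  assumes "k > 0" "a \<ge> 0"
  shows "k * (a / k) powr e = a powr e * k powr (1 - e)"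
  using assms by (simp add: powr_divide powr_diff)

theorem mainTheorem7:
  fixes U :: "'u set" and V :: "'v set" and \<Gamma> :: "'v \<Rightarrow> 'u set"
    and ord :: "'v \<Rightarrow> 'u list"
    and d m r p :: nat and \<tau> :: real
  assumes "finite U" "finite V"
    and "\<And>v. v \<in> V \<Longrightarrow> \<Gamma> v \<subseteq> U"
    and "\<And>v. v \<in> V \<Longrightarrow> card (\<Gamma> v) = d" and "d \<ge> 1"
    and "\<And>v. v \<in> V \<Longrightarrow> distinct (ord v) \<and> set (ord v) = \<Gamma> v"
    and "m > 0" and "r > 0" and "p > 0"
    and "0 < \<tau>" and "\<tau> \<le> 1"
    and "(2::real) powr (- real r) = (2 / real (2 ^ m)) powr (1 / ((2 - \<tau>) * real d))"
  shows "(measure_pmf.expectation (fast_filter_pmf U r m)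
           (\<lambda>\<omega>. \<Sum>i\<in>{1..2 ^ m}. real (card (survival_set V ord r m \<omega> i)))
         = 2 powr (1 / (2 - \<tau>)) * real (card V) * real (2 ^ m) powr (1 - 1 / (2 - \<tau>))) \<and>
         (\<forall>i\<in>{1..2 ^ m}.
           real (2 ^ m) / real p *
             (measure_pmf.expectation (fast_filter_pmf U r m)
                (\<lambda>\<omega>. real (card (survival_set V ord r m \<omega> i)))) ^ 2
         \<le> 4 * (real (card V) ^ 2 * real (2 ^ m) powr (1 - 2 / (2 - \<tau>)) / real p))"
proof -
  define k e where "k = real (2 ^ m)" and "e = 1 / (2 - \<tau>)"
  define N where "N = real (card V)"
  have "k > 0" and "e \<le> 1"
    using assms(10,11) by (auto simp: k_def e_def field_simps)
  have neighbours: "set (ord v) \<subseteq> U \<and> distinct (ord v) \<and> length (ord v) = d" if "v \<in> V" for v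
    using assms(3,4,6)[OF that] distinct_card by metis
  have "1 / 2 ^ r = (2 / k) powr (1 / ((2 - \<tau>) * real d))"
    using assms(12) by (simp add: k_def powr_minus powr_realpow divide_inverse)
  then have "(1 / 2 ^ r) ^ d = (2 / k) powr e"
    unfolding e_def using \<open>k > 0\<close> assms(5) by (intro power_of_powr_root) auto
  then have E: "measure_pmf.expectation (fast_filter_pmf U r m)
      (\<lambda>\<omega>. real (card (survival_set V ord r m \<omega> i))) = N * (2 / k) powr e" for i
    unfolding N_def using expectation_card_survival_set[OF assms(1,2,8) neighbours] by simp
  have "integrable (fast_filter_pmf U r m) (\<lambda>\<omega>. real (card (survival_set V ord r m \<omega> i)))"
    for i unfolding survival_set_def by (rule integrable_card_filter[OF assms(2)])
  then have "measure_pmf.expectation (fast_filter_pmf U r m)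
      (\<lambda>\<omega>. \<Sum>i\<in>{1..2 ^ m}. real (card (survival_set V ord r m \<omega> i)))
    = k * (N * (2 / k) powr e)" (is "?sum = _")
    by (simp add: Bochner_Integration.integral_sum E k_def)
  also have "\<dots> = 2 powr e * N * k powr (1 - e)"
    using mult_divide_powr[OF \<open>k > 0\<close>, of 2 e] by simp
  finally have sum_expectation: "?sum = 2 powr e * N * k powr (1 - e)" .
  have "k / real p * (N * (2 / k) powr e) ^ 2 = 2 powr (2 * e) * (N ^ 2 * k powr (1 - 2 * e) / real p)"
    using mult_divide_powr[OF \<open>k > 0\<close>, of 2 "2 * e"] \<open>k > 0\<close>
    by (simp add: power_mult_distrib powr_power field_simps)
  also have "\<dots> \<le> 4 * (N ^ 2 * k powr (1 - 2 * e) / real p)"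
  proof (rule mult_right_mono)
    show "(2::real) powr (2 * e) \<le> 4"
      using powr_mono[of "2 * e" 2 "2::real"] \<open>e \<le> 1\<close> by simp
  qed simp
  finally show ?thesis
    using sum_expectation by (simp add: E k_def e_def N_def)
qed

end
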